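(* Let $\gamma\in\mathrm{SL}_2(\mathbb{Z})$ and $k\ge1$ with $\det(\mathrm{Id}_2-\gamma^k)\neq0$, so that $\operatorname{coker}(\mathrm{Id}_2-\gamma^k)=\mathbb{Z}^2/(\mathrm{Id}_2-\gamma^k)\mathbb{Z}^2$ is finite, and let $\gamma$ act on it by multiplication. Then for $1\le p<k$, the number of fixed points of $\gamma^p$ on $\operatorname{coker}(\mathrm{Id}_2-\gamma^k)$ equals $|\det(\mathrm{Id}_2-\gamma^d)|$, where $d=\gcd(k,p)$ if $\gamma$ has infinite order, and $d=\gcd(k,p,m)$ if $\gamma$ has finite order $m$. *)

theory Defs
  imports "HOL-Analysis.Analysis"
begin

primrec mat_pow :: "int^2^2 \<Rightarrow> nat \<Rightarrow> int^2^2" where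
  "mat_pow A 0 = mat 1"
| "mat_pow A (Suc n) = A ** mat_pow A n"

definition coker_rel :: "int^2^2 \<Rightarrow> ((int^2) \<times> (int^2)) set" where
  "coker_rel A = {(v, w). v - w \<in> range (\<lambda>x. A *v x)}"

definition coker :: "int^2^2 \<Rightarrow> (int^2) set set" where
  "coker A = UNIV // coker_rel A"

definition coker_fixed :: "int^2^2 \<Rightarrow> int^2^2 \<Rightarrow> (int^2) set set" where
  "coker_fixed A G = {C \<in> coker A. \<forall>v\<in>C. (G *v v, v) \<in> coker_rel A}"

definition has_finite_order :: "int^2^2 \<Rightarrow> bool" where
  "has_finite_order g \<longleftrightarrow> (\<exists>n>0. mat_pow g n = mat 1)"

definition mat_order :: "int^2^2 \<Rightarrow> nat" where
  "mat_order g = (LEAST n. n > 0 \<and> mat_pow g n = mat 1)"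

end

theory Submission
  imports Defs
begin

text \<open>
  Everything happens in the commutative ring \<open>\<int>[g]\<close> of integer polynomials in \<open>g\<close>.
  Let \<open>A = 1 - g\<^sup>k\<close>, \<open>B = 1 - g\<^sup>p\<close> and \<open>D = 1 - g\<^sup>d\<close>. As \<open>d\<close> divides \<open>k\<close> and \<open>p\<close>, geometric
  sums give \<open>A = D A'\<close> and \<open>B = D B'\<close> in \<open>\<int>[g]\<close>; conversely Bezout's identity for the
  exponents (together with \<open>g\<^sup>m = 1\<close> when \<open>g\<close> has order \<open>m\<close>) gives \<open>D = A X + B Y\<close>.
  A class \<open>[v]\<close> of \<open>\<int>\<^sup>2 / A \<int>\<^sup>2\<close> is fixed by \<open>g\<^sup>p\<close> iff \<open>B v \<in> A \<int>\<^sup>2\<close>, and these two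
  identities show that this happens iff \<open>v \<in> A' \<int>\<^sup>2\<close>. Since \<open>A = A' D\<close>, multiplication by \<open>A'\<close>
  identifies \<open>\<int>\<^sup>2 / D \<int>\<^sup>2\<close> with \<open>A' \<int>\<^sup>2 / A \<int>\<^sup>2\<close>, and \<open>|\<int>\<^sup>2 / D \<int>\<^sup>2| = |det D|\<close> by
  column reduction of \<open>D\<close> to triangular form.
\<close>

lemma matrix_add_rdistrib: "((A::'a::semiring_1^'n^'m) + B) ** C = A ** C + B ** C"
  by (vector matrix_matrix_mult_def sum.distrib[symmetric] distrib_right)

lemma matrix_diff_ldistrib: "(A::'a::ring_1^'n^'m) ** (B - C) = A ** B - A ** C"
  by (vector matrix_matrix_mult_def sum_subtractf right_diff_distrib)

lemma matrix_diff_rdistrib: "((A::'a::ring_1^'n^'m) - B) ** C = A ** C - B ** C"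
  by (vector matrix_matrix_mult_def sum_subtractf left_diff_distrib)

lemma matrix_mul_uminus_right: "(A::'a::ring_1^'n^'m) ** (- B) = - (A ** B)"
  using matrix_diff_ldistrib[of A 0 B] by simp

lemma matrix_mul_mat_left: "mat c ** (A::'a::semiring_1^'n^'m) = (\<chi> i j. c * A$i$j)"
  by (simp add: vec_eq_iff matrix_matrix_mult_def mat_def if_distrib if_distribR cong: if_cong)

lemma mat_matrix_mul_commute: "mat c ** (A::'a::comm_semiring_1^'n^'n) = A ** mat c"
  by (simp add: vec_eq_iff matrix_matrix_mult_def mat_def if_distrib if_distribR mult.commute cong: if_cong)

lemma matrix_vector_mult_uminus_right: "(A::'a::ring_1^'n^'m) *v (- x) = - (A *v x)"
  using matrix_vector_mult_diff_distrib[of A 0 x] by simp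

lemma uminus_in_range_matrix_vector_mult:
  "x \<in> range ((*v) A) \<Longrightarrow> - x \<in> range ((*v) (A::'a::ring_1^'n^'m))"
  by (auto simp flip: matrix_vector_mult_uminus_right)

lemma matrix_vector_mult_component_2:
  "((A::'a::comm_semiring_1^2^2) *v x)$i = A$i$1 * x$1 + A$i$2 * x$2"
  by (simp add: matrix_vector_mult_def sum_2)

lemma inj_matrix_vector_mult_2:
  fixes D :: "'a::idom^2^2"
  assumes "det D \<noteq> 0"
  shows "inj ((*v) D)"
proof (rule injI)
  fix x y assume "D *v x = D *v y"
  then have "D *v (x - y) = 0"
    by (simp add: matrix_vector_mult_diff_distrib)
  then have e: "D$i$1 * (x - y)$1 + D$i$2 * (x - y)$2 = 0" for i
    by (metis matrix_vector_mult_component_2 zero_index)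
  have "det D * (x - y)$1 = D$2$2 * (D$1$1 * (x - y)$1 + D$1$2 * (x - y)$2)
      - D$1$2 * (D$2$1 * (x - y)$1 + D$2$2 * (x - y)$2)"
    by (simp add: det_2 algebra_simps)
  also have "\<dots> = 0"
    by (simp only: e mult_zero_right diff_self)
  finally have 1: "(x - y)$1 = 0"
    using assms by simp
  have "det D * (x - y)$2 = D$1$1 * (D$2$1 * (x - y)$1 + D$2$2 * (x - y)$2)
      - D$2$1 * (D$1$1 * (x - y)$1 + D$1$2 * (x - y)$2)"
    by (simp add: det_2 algebra_simps)
  also have "\<dots> = 0"
    by (simp only: e mult_zero_right diff_self)
  finally have 2: "(x - y)$2 = 0"
    using assms by simp
  show "x = y"
    using 1 2 by (simp add: vec_eq_iff forall_2)
qed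

inductive_set mat_polys :: "'a::comm_ring_1^'n^'n \<Rightarrow> ('a^'n^'n) set" for g where
  mat_polys_mat: "mat c \<in> mat_polys g"
| mat_polys_gen: "g \<in> mat_polys g"
| mat_polys_add: "M \<in> mat_polys g \<Longrightarrow> N \<in> mat_polys g \<Longrightarrow> M + N \<in> mat_polys g"
| mat_polys_mult: "M \<in> mat_polys g \<Longrightarrow> N \<in> mat_polys g \<Longrightarrow> M ** N \<in> mat_polys g"

lemma mat_polys_uminus: "M \<in> mat_polys g \<Longrightarrow> - M \<in> mat_polys g"
proof -
  assume "M \<in> mat_polys g"
  moreover have "mat (- 1) ** M = - M"
    by (simp add: matrix_mul_mat_left vec_eq_iff)
  ultimately show ?thesis
    by (metis mat_polys_mat mat_polys_mult)
qed

lemma mat_polys_diff: "M \<in> mat_polys g \<Longrightarrow> N \<in> mat_polys g \<Longrightarrow> M - N \<in> mat_polys g"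
  using mat_polys_add[OF _ mat_polys_uminus] by (metis diff_conv_add_uminus)

lemma mat_polys_sum: "(\<And>i. i \<in> I \<Longrightarrow> f i \<in> mat_polys g) \<Longrightarrow> sum f I \<in> mat_polys g"
  by (induction I rule: infinite_finite_induct) (auto intro: mat_polys_add mat_polys_mat[of 0, simplified])

lemma mat_polys_commute_gen: "M \<in> mat_polys g \<Longrightarrow> M ** g = g ** M"
  by (induction rule: mat_polys.induct)
     (simp_all add: mat_matrix_mul_commute matrix_add_ldistrib matrix_add_rdistrib, metis matrix_mul_assoc)

lemma mat_polys_commute:
  assumes "M \<in> mat_polys g" "N \<in> mat_polys g"
  shows "M ** N = N ** M"
  using assms(2)
proof (induction rule: mat_polys.induct)
  case (mat_polys_mult N1 N2)
  then show ?case by (metis matrix_mul_assoc)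
qed (simp_all add: mat_matrix_mul_commute mat_polys_commute_gen[OF assms(1)]
    matrix_add_ldistrib matrix_add_rdistrib)

lemma mat_pow_add: "mat_pow g (a + b) = mat_pow g a ** mat_pow g b"
  by (induction a) (simp_all add: matrix_mul_assoc)

lemma mat_pow_in_mat_polys: "mat_pow g n \<in> mat_polys g"
  by (induction n) (simp_all add: mat_polys_mat mat_polys_gen mat_polys_mult)

lemma one_minus_mat_pow_mult:
  "mat 1 - mat_pow g (d * m) = (mat 1 - mat_pow g d) ** (\<Sum>i<m. mat_pow g (d * i))"
proof (induction m)
  case (Suc m)
  have "(mat 1 - mat_pow g d) ** (\<Sum>i<Suc m. mat_pow g (d * i))
      = (mat 1 - mat_pow g (d * m)) + (mat 1 - mat_pow g d) ** mat_pow g (d * m)"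
    by (simp add: matrix_add_ldistrib Suc.IH)
  also have "\<dots> = mat 1 - mat_pow g (d * Suc m)"
    by (simp add: matrix_diff_rdistrib mat_pow_add[symmetric])
  finally show ?case ..
qed simp

lemma one_minus_mat_pow_dvd:
  assumes "d dvd n"
  obtains S where "S \<in> mat_polys g" "mat 1 - mat_pow g n = (mat 1 - mat_pow g d) ** S"
proof -
  obtain m where "n = d * m" using assms ..
  then show thesis
    using that[of "\<Sum>i<m. mat_pow g (d * i)"] one_minus_mat_pow_mult
    by (simp add: mat_polys_sum mat_pow_in_mat_polys)
qed

lemma one_minus_mat_pow_gcd:
  obtains X Y where "X \<in> mat_polys g" "Y \<in> mat_polys g"
    "mat 1 - mat_pow g (gcd a b) = (mat 1 - mat_pow g a) ** X + (mat 1 - mat_pow g b) ** Y"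
proof (cases "a = 0")
  case True
  then show thesis
    using that[of 0 "mat 1"] by (simp add: mat_polys_mat[of 0, simplified] mat_polys_mat)
next
  case False
  then obtain x y where "a * x = b * y + gcd a b" using bezout_nat by blast
  then have xy: "a * x = gcd a b + b * y" by simp
  obtain X where X: "X \<in> mat_polys g" "mat 1 - mat_pow g (a * x) = (mat 1 - mat_pow g a) ** X"
    using one_minus_mat_pow_dvd[of a "a * x"] by auto
  obtain Y where Y: "Y \<in> mat_polys g" "mat 1 - mat_pow g (b * y) = (mat 1 - mat_pow g b) ** Y"
    using one_minus_mat_pow_dvd[of b "b * y"] by auto
  let ?c = "mat_pow g (gcd a b)"
  have "mat 1 - ?c = (mat 1 - mat_pow g (a * x)) - ?c ** (mat 1 - mat_pow g (b * y))"
    by (simp only: xy mat_pow_add matrix_diff_ldistrib matrix_mul_rid diff_diff_eq2 diff_add_cancel)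
  also have "\<dots> = (mat 1 - mat_pow g a) ** X - ?c ** ((mat 1 - mat_pow g b) ** Y)"
    by (simp only: X(2) Y(2))
  also have "\<dots> = (mat 1 - mat_pow g a) ** X + (mat 1 - mat_pow g b) ** (- (?c ** Y))"
  proof -
    have "?c ** (mat 1 - mat_pow g b) = (mat 1 - mat_pow g b) ** ?c"
      by (intro mat_polys_commute[of _ g] mat_pow_in_mat_polys mat_polys_diff mat_polys_mat)
    then show ?thesis
      by (simp only: matrix_mul_assoc matrix_mul_uminus_right diff_conv_add_uminus)
  qed
  finally show thesis
    using that X(1) mat_polys_uminus[OF mat_polys_mult[OF mat_pow_in_mat_polys Y(1)]] by blast
qed

lemma one_minus_mat_pow_gcd_periodic:
  assumes "mat_pow g m = mat 1"
  obtains X Y where "X \<in> mat_polys g" "Y \<in> mat_polys g"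
    "mat 1 - mat_pow g (gcd (gcd a b) m) = (mat 1 - mat_pow g a) ** X + (mat 1 - mat_pow g b) ** Y"
proof -
  obtain X Y where XY: "X \<in> mat_polys g" "Y \<in> mat_polys g"
    "mat 1 - mat_pow g (gcd a b) = (mat 1 - mat_pow g a) ** X + (mat 1 - mat_pow g b) ** Y"
    using one_minus_mat_pow_gcd .
  obtain Z W where Z: "Z \<in> mat_polys g"
    "mat 1 - mat_pow g (gcd (gcd a b) m) = (mat 1 - mat_pow g (gcd a b)) ** Z + (mat 1 - mat_pow g m) ** W"
    using one_minus_mat_pow_gcd .
  have "mat 1 - mat_pow g (gcd (gcd a b) m) = (mat 1 - mat_pow g (gcd a b)) ** Z"
    using Z(2) by (simp add: assms)
  also have "\<dots> = (mat 1 - mat_pow g a) ** (X ** Z) + (mat 1 - mat_pow g b) ** (Y ** Z)"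
    by (simp only: XY(3) matrix_add_rdistrib matrix_mul_assoc)
  finally have "mat 1 - mat_pow g (gcd (gcd a b) m)
      = (mat 1 - mat_pow g a) ** (X ** Z) + (mat 1 - mat_pow g b) ** (Y ** Z)" .
  then show thesis
    using that XY Z mat_polys_mult by blast
qed

lemma mat_pow_mat_order: "has_finite_order g \<Longrightarrow> mat_pow g (mat_order g) = mat 1"
  unfolding has_finite_order_def mat_order_def by (metis (mono_tags, lifting) LeastI)

lemma one_minus_mat_pow_gcd_order:
  obtains X Y where "X \<in> mat_polys g" "Y \<in> mat_polys g"
    "mat 1 - mat_pow g (if has_finite_order g then gcd (gcd a b) (mat_order g) else gcd a b)
      = (mat 1 - mat_pow g a) ** X + (mat 1 - mat_pow g b) ** Y"
proof (cases "has_finite_order g")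
  case True
  obtain X Y where "X \<in> mat_polys g" "Y \<in> mat_polys g"
    "mat 1 - mat_pow g (gcd (gcd a b) (mat_order g))
      = (mat 1 - mat_pow g a) ** X + (mat 1 - mat_pow g b) ** Y"
    by (rule one_minus_mat_pow_gcd_periodic[OF mat_pow_mat_order[OF True]])
  with True show thesis
    using that by simp
next
  case False
  obtain X Y where "X \<in> mat_polys g" "Y \<in> mat_polys g"
    "mat 1 - mat_pow g (gcd a b) = (mat 1 - mat_pow g a) ** X + (mat 1 - mat_pow g b) ** Y"
    by (rule one_minus_mat_pow_gcd)
  with False show thesis
    using that by simp
qed

lemma vimage_range_eq_range_cofactor:
  fixes A B D A' B' X Y :: "'a::comm_ring_1^'n^'n"
  assumes "inj ((*v) D)" and "A = D ** A'" "B = D ** B'" "D = A ** X + B ** Y"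
    and "A' \<in> mat_polys g" "B' \<in> mat_polys g" "Y \<in> mat_polys g"
  shows "(*v) B -` range ((*v) A) = range ((*v) A')"
proof
  show "range ((*v) A') \<subseteq> (*v) B -` range ((*v) A)"
  proof clarify
    fix u
    have "B *v (A' *v u) = A *v (B' *v u)"
      using mat_polys_commute[OF assms(5,6)]
      by (simp add: assms(2,3) matrix_vector_mul_assoc matrix_mul_assoc[symmetric])
    then show "A' *v u \<in> (*v) B -` range ((*v) A)"
      by simp
  qed
  show "(*v) B -` range ((*v) A) \<subseteq> range ((*v) A')"
  proof clarify
    fix v w assume "B *v v = A *v w"
    then have "D *v (B' *v v) = D *v (A' *v w)"
      by (simp add: assms(2,3) matrix_vector_mul_assoc)
    then have B'v: "B' *v v = A' *v w"
      by (rule injD[OF assms(1)])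
    have "D *v v = D *v (A' *v (X *v v) + B' *v (Y *v v))"
      by (subst (1) assms(4))
         (simp add: assms(2,3) matrix_vector_mul_assoc matrix_mul_assoc matrix_vector_right_distrib
            matrix_vector_mult_add_rdistrib)
    then have "v = A' *v (X *v v) + B' *v (Y *v v)"
      by (rule injD[OF assms(1)])
    also have "\<dots> = A' *v (X *v v) + Y *v (A' *v w)"
      using mat_polys_commute[OF assms(6,7)] by (simp add: matrix_vector_mul_assoc flip: B'v)
    also have "\<dots> = A' *v (X *v v + Y *v w)"
      using mat_polys_commute[OF assms(5,7)]
      by (simp add: matrix_vector_mul_assoc matrix_vector_right_distrib)
    finally show "v \<in> range ((*v) A')"
      by blast
  qed
qed

lemma card_range_eq_if_same_fibres:
  assumes "\<And>x y. f x = f y \<longleftrightarrow> h x = h y"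
  shows "card (range f) = card (range h)"
proof -
  have f_eq: "f x = (f \<circ> inv h) (h x)" for x
    using assms by (metis comp_apply f_inv_into_f rangeI)
  then have "range f = (f \<circ> inv h) ` range h"
    by (auto simp: image_iff)
  moreover have "inj_on (f \<circ> inv h) (range h)"
    by (auto simp: inj_on_def f_eq[symmetric] assms f_inv_into_f)
  ultimately show ?thesis
    by (metis card_image)
qed

lemma card_quotient_eq_card_representatives:
  assumes "equiv UNIV R"
    and "\<And>v. \<exists>r\<in>S. (v, f r) \<in> R"
    and "\<And>r s. r \<in> S \<Longrightarrow> s \<in> S \<Longrightarrow> (f r, f s) \<in> R \<Longrightarrow> r = s"
  shows "card (UNIV // R) = card S"
proof -
  have "bij_betw (\<lambda>r. R``{f r}) S (UNIV // R)"
  proof (rule bij_betwI')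
    show "R``{f r} = R``{f s} \<longleftrightarrow> r = s" if "r \<in> S" "s \<in> S" for r s
      using assms(3)[OF that] eq_equiv_class_iff[OF assms(1)] by blast
    show "R``{f r} \<in> UNIV // R" for r
      by (rule quotientI) simp
    show "\<exists>r\<in>S. C = R``{f r}" if "C \<in> UNIV // R" for C
      using that assms(2) equiv_class_eq[OF assms(1)] by (metis quotientE)
  qed
  then show ?thesis
    by (simp add: bij_betw_same_card)
qed

lemma residues_diff_multiple_eq_0:
  fixes a r s z :: int
  assumes "0 \<le> r" "r < a" "0 \<le> s" "s < a" "r - s = a * z"
  shows "z = 0"
proof -
  have "r mod a = (s + z * a) mod a"
    using assms(5) by (simp add: algebra_simps eq_diff_eq)
  then have "r = s"
    using assms(1-4) by (simp add: mod_pos_pos_trivial)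
  then show ?thesis
    using assms by simp
qed

lemma coker_relI: "v - w = A *v z \<Longrightarrow> (v, w) \<in> coker_rel A"
  unfolding coker_rel_def by auto

lemma coker_relE:
  assumes "(v, w) \<in> coker_rel A"
  obtains z where "v - w = A *v z"
  using assms unfolding coker_rel_def by auto

lemma equiv_coker_rel: "equiv UNIV (coker_rel A)"
proof (rule equivI)
  show "refl (coker_rel A)"
    by (rule reflI, rule coker_relI[where z = 0]) simp
  show "sym (coker_rel A)"
  proof (rule symI)
    fix v w assume "(v, w) \<in> coker_rel A"
    then obtain z where "v - w = A *v z"
      by (rule coker_relE)
    then have "w - v = A *v (- z)"
      by (metis minus_diff_eq matrix_vector_mult_uminus_right)
    then show "(w, v) \<in> coker_rel A"
      by (rule coker_relI)
  qed
  show "trans (coker_rel A)"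
  proof (rule transI)
    fix u v w assume "(u, v) \<in> coker_rel A" "(v, w) \<in> coker_rel A"
    then obtain y z where y: "u - v = A *v y" and z: "v - w = A *v z"
      by (meson coker_relE)
    have "u - w = (u - v) + (v - w)"
      by simp
    also have "\<dots> = A *v (y + z)"
      by (simp add: y z matrix_vector_right_distrib)
    finally show "(u, w) \<in> coker_rel A"
      by (rule coker_relI)
  qed
qed simp

lemma fixed_in_coker_iff:
  "(P *v v, v) \<in> coker_rel A \<longleftrightarrow> (mat 1 - P) *v v \<in> range ((*v) A)"
proof -
  have "(mat 1 - P) *v v = - (P *v v - v)"
    by (simp add: matrix_vector_mult_diff_rdistrib)
  then show ?thesis
    unfolding coker_rel_def using uminus_in_range_matrix_vector_mult
    by (metis (no_types, lifting) case_prod_conv mem_Collect_eq minus_minus)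
qed

lemma coker_fixed_eq_classes:
  fixes A P :: "int^2^2"
  assumes "P ** A = A ** P"
  shows "coker_fixed A P = (\<lambda>v. coker_rel A``{v}) ` {v. (P *v v, v) \<in> coker_rel A}"
proof
  show "coker_fixed A P \<subseteq> (\<lambda>v. coker_rel A``{v}) ` {v. (P *v v, v) \<in> coker_rel A}"
  proof
    fix C assume C: "C \<in> coker_fixed A P"
    then obtain v where v: "C = coker_rel A``{v}"
      unfolding coker_fixed_def coker_def by (auto elim: quotientE)
    then have "v \<in> C"
      using equiv_class_self[OF equiv_coker_rel UNIV_I] by simp
    then have "(P *v v, v) \<in> coker_rel A"
      using C unfolding coker_fixed_def by blast
    then show "C \<in> (\<lambda>v. coker_rel A``{v}) ` {v. (P *v v, v) \<in> coker_rel A}"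
      using v by blast
  qed
  show "(\<lambda>v. coker_rel A``{v}) ` {v. (P *v v, v) \<in> coker_rel A} \<subseteq> coker_fixed A P"
  proof clarify
    fix v assume "(P *v v, v) \<in> coker_rel A"
    then obtain z where z: "P *v v - v = A *v z"
      by (rule coker_relE)
    have "(P *v w, w) \<in> coker_rel A" if "(v, w) \<in> coker_rel A" for w
    proof -
      from that obtain y where y: "v - w = A *v y"
        by (rule coker_relE)
      have "P *v w - w = (P *v v - v) - (P *v (v - w) - (v - w))"
        by (simp add: matrix_vector_mult_diff_distrib)
      also have "\<dots> = A *v (z - (P *v y - y))"
        by (simp add: z y matrix_vector_mul_assoc assms matrix_vector_mult_diff_distrib)
      finally show ?thesis
        by (rule coker_relI)
    qed
    then show "coker_rel A``{v} \<in> coker_fixed A P"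
      unfolding coker_fixed_def coker_def by (auto intro: quotientI)
  qed
qed

lemma card_classes_range_cofactor:
  fixes A A' D :: "int^2^2"
  assumes "A = A' ** D" "inj ((*v) A')"
  shows "card ((\<lambda>v. coker_rel A``{v}) ` range ((*v) A')) = card (coker D)"
proof -
  have "(A' *v x, A' *v y) \<in> coker_rel A \<longleftrightarrow> (x, y) \<in> coker_rel D" for x y
  proof
    assume "(A' *v x, A' *v y) \<in> coker_rel A"
    then obtain z where "A' *v x - A' *v y = A *v z"
      by (rule coker_relE)
    then have "A' *v (x - y) = A' *v (D *v z)"
      by (simp add: assms(1) matrix_vector_mult_diff_distrib matrix_vector_mul_assoc)
    then have "x - y = D *v z"
      by (rule injD[OF assms(2)])
    then show "(x, y) \<in> coker_rel D"
      by (rule coker_relI)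
  next
    assume "(x, y) \<in> coker_rel D"
    then obtain z where "x - y = D *v z"
      by (rule coker_relE)
    then have "A' *v x - A' *v y = A *v z"
      by (simp add: assms(1) matrix_vector_mult_diff_distrib[symmetric] matrix_vector_mul_assoc)
    then show "(A' *v x, A' *v y) \<in> coker_rel A"
      by (rule coker_relI)
  qed
  then have "coker_rel A``{A' *v x} = coker_rel A``{A' *v y} \<longleftrightarrow> coker_rel D``{x} = coker_rel D``{y}"
    for x y
    by (simp add: eq_equiv_class_iff[OF equiv_coker_rel])
  then have "card (range (\<lambda>x. coker_rel A``{A' *v x})) = card (range (\<lambda>x. coker_rel D``{x}))"
    by (rule card_range_eq_if_same_fibres)
  moreover have "coker D = range (\<lambda>x. coker_rel D``{x})"
    by (auto simp: coker_def quotient_def)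
  ultimately show ?thesis
    by (simp add: image_image)
qed

lemma card_coker_lower_triangular:
  fixes T :: "int^2^2"
  assumes "T$1$2 = 0" "T$1$1 > 0" "T$2$2 > 0"
  shows "int (card (coker T)) = T$1$1 * T$2$2"
proof -
  define a where "a = T$1$1"
  define b where "b = T$2$1"
  define c where "c = T$2$2"
  have a: "a > 0" and c: "c > 0"
    using assms by (simp_all add: a_def c_def)
  have T_mult: "T *v z = vector [a * z$1, b * z$1 + c * z$2]" for z
    by (simp add: vec_eq_iff forall_2 matrix_vector_mult_component_2 assms a_def b_def c_def)
  let ?box = "{0..<a} \<times> {0..<c}" and ?f = "\<lambda>(i, j). vector [i, j] :: int^2"
  have "card (coker T) = card ?box"
    unfolding coker_def
  proof (rule card_quotient_eq_card_representatives[OF equiv_coker_rel])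
    fix v :: "int^2"
    define x where "x = v$1 div a"
    define y where "y = (v$2 - b * x) div c"
    have "v - ?f (v$1 mod a, (v$2 - b * x) mod c) = T *v vector [x, y]"
      by (simp add: T_mult vec_eq_iff forall_2 x_def y_def minus_mod_eq_mult_div algebra_simps)
    then have "(v, ?f (v$1 mod a, (v$2 - b * x) mod c)) \<in> coker_rel T"
      by (rule coker_relI)
    moreover have "(v$1 mod a, (v$2 - b * x) mod c) \<in> ?box"
      using a c by simp
    ultimately show "\<exists>r\<in>?box. (v, ?f r) \<in> coker_rel T"
      by (rule bexI)
  next
    fix r s assume "r \<in> ?box" "s \<in> ?box" "(?f r, ?f s) \<in> coker_rel T"
    moreover obtain i j i' j' where ij: "r = (i, j)" "s = (i', j')"
      by fastforce
    ultimately have box: "0 \<le> i" "i < a" "0 \<le> j" "j < c" "0 \<le> i'" "i' < a" "0 \<le> j'" "j' < c"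
      and rel: "(vector [i, j], vector [i', j']) \<in> coker_rel T"
      by auto
    from rel obtain z where z: "vector [i, j] - vector [i', j'] = T *v z"
      by (rule coker_relE)
    have 1: "i - i' = a * z$1" and 2: "j - j' = b * z$1 + c * z$2"
      using arg_cong[OF z, of "\<lambda>v. v$1"] arg_cong[OF z, of "\<lambda>v. v$2"]
      by (simp_all add: T_mult)
    have "z$1 = 0"
      using residues_diff_multiple_eq_0[OF box(1,2,5,6) 1] .
    then have "z$2 = 0"
      using residues_diff_multiple_eq_0[OF box(3,4,7,8)] 2 by simp
    then show "r = s"
      using 1 2 \<open>z$1 = 0\<close> ij by simp
  qed
  then show ?thesis
    using a c by (simp add: a_def c_def)
qed

lemma coker_mult_right_invertible:
  fixes N U V :: "int^2^2"
  assumes "U ** V = mat 1"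
  shows "coker (N ** U) = coker N"
proof -
  have "range ((*v) (N ** U)) = range ((*v) N)"
  proof
    show "range ((*v) (N ** U)) \<subseteq> range ((*v) N)"
      by (auto simp: matrix_vector_mul_assoc[symmetric])
    show "range ((*v) N) \<subseteq> range ((*v) (N ** U))"
    proof
      fix w assume "w \<in> range ((*v) N)"
      then obtain y where "w = N *v y" ..
      then have "w = (N ** U) *v (V *v y)"
        by (simp add: matrix_vector_mul_assoc matrix_mul_assoc[symmetric] assms)
      then show "w \<in> range ((*v) (N ** U))" by blast
    qed
  qed
  then show ?thesis
    unfolding coker_def coker_rel_def by simp
qed

lemma column_reduction_2:
  fixes N :: "int^2^2"
  assumes "det N \<noteq> 0"
  obtains U V where "U ** V = mat 1" "(N ** U)$1$2 = 0" "(N ** U)$1$1 > 0" "det U = sgn (det N)"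
proof -
  define h where "h = gcd (N$1$1) (N$1$2)"
  have "h > 0"
    using assms by (auto simp: h_def det_2)
  obtain q1 where q1: "N$1$1 = h * q1" unfolding h_def by (meson gcd_dvd1 dvdE)
  obtain q2 where q2: "N$1$2 = h * q2" unfolding h_def by (meson gcd_dvd2 dvdE)
  obtain s t where st: "s * N$1$1 + t * N$1$2 = h"
    unfolding h_def using bezout_int by blast
  have "h * (s * q1 + t * q2) = h * 1"
    using st q1 q2 by (simp add: algebra_simps)
  then have st1: "s * q1 + t * q2 = 1"
    using \<open>h > 0\<close> by simp
  define \<sigma> where "\<sigma> = sgn (det N)"
  have "\<sigma> * \<sigma> = 1"
    using assms by (simp add: \<sigma>_def sgn_if)
  then have \<sigma>: "\<sigma> * (\<sigma> * x) = x" for x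
    by (metis mult.assoc mult_1)
  define U :: "int^2^2" where
    "U = (\<chi> i j. if i = 1 then (if j = 1 then s else - \<sigma> * q2) else (if j = 1 then t else \<sigma> * q1))"
  define V :: "int^2^2" where
    "V = (\<chi> i j. if i = 1 then (if j = 1 then q1 else q2) else (if j = 1 then - \<sigma> * t else \<sigma> * s))"
  show thesis
  proof
    show "U ** V = mat 1"
      using st1
      by (simp add: vec_eq_iff forall_2 matrix_matrix_mult_def sum_2 mat_def U_def V_def algebra_simps \<sigma>)
    show "(N ** U)$1$2 = 0"
      by (simp add: matrix_matrix_mult_def sum_2 U_def q1 q2 algebra_simps)
    show "(N ** U)$1$1 > 0"
      using st \<open>h > 0\<close> by (simp add: matrix_matrix_mult_def sum_2 U_def algebra_simps)
    have "det U = \<sigma> * (s * q1 + t * q2)"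
      by (simp add: det_2 U_def algebra_simps)
    then show "det U = sgn (det N)"
      by (simp add: st1 \<sigma>_def)
  qed
qed

lemma card_coker_eq_abs_det:
  fixes N :: "int^2^2"
  assumes "det N \<noteq> 0"
  shows "int (card (coker N)) = \<bar>det N\<bar>"
proof -
  obtain U V where UV: "U ** V = mat 1" and T: "(N ** U)$1$2 = 0" "(N ** U)$1$1 > 0"
    and det_U: "det U = sgn (det N)"
    using column_reduction_2[OF assms] .
  have "(N ** U)$1$1 * (N ** U)$2$2 = det (N ** U)"
    using T(1) by (simp add: det_2)
  also have "\<dots> = \<bar>det N\<bar>"
    by (simp add: det_mul det_U abs_sgn)
  finally have diag: "(N ** U)$1$1 * (N ** U)$2$2 = \<bar>det N\<bar>" .
  then have "(N ** U)$2$2 > 0"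
    using T(2) assms by (metis zero_less_abs_iff zero_less_mult_pos)
  then have "int (card (coker (N ** U))) = \<bar>det N\<bar>"
    using card_coker_lower_triangular[OF T] diag by simp
  then show ?thesis
    by (simp add: coker_mult_right_invertible[OF UV])
qed

lemma card_coker_fixed_eq_abs_det:
  fixes g A P D A' B' X Y :: "int^2^2"
  assumes "det A \<noteq> 0"
    and "A = D ** A'" "mat 1 - P = D ** B'" "D = A ** X + (mat 1 - P) ** Y"
    and "D \<in> mat_polys g" "A' \<in> mat_polys g" "B' \<in> mat_polys g" "Y \<in> mat_polys g"
  shows "int (card (coker_fixed A P)) = \<bar>det D\<bar>"
proof -
  have "det D \<noteq> 0" "det A' \<noteq> 0"
    using assms(1,2) by (auto simp: det_mul)
  have "P = mat 1 - D ** B'"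
    using assms(3) by (simp add: algebra_simps)
  then have "P ** A = A ** P"
    using assms(2,5-7) by (intro mat_polys_commute) (auto intro: mat_polys_mult mat_polys_diff mat_polys_mat)
  have "{v. (P *v v, v) \<in> coker_rel A} = (*v) (mat 1 - P) -` range ((*v) A)"
    by (simp add: fixed_in_coker_iff vimage_def)
  also have "\<dots> = range ((*v) A')"
    using inj_matrix_vector_mult_2[OF \<open>det D \<noteq> 0\<close>] assms(2-4,6-8)
    by (rule vimage_range_eq_range_cofactor)
  finally have "coker_fixed A P = (\<lambda>v. coker_rel A``{v}) ` range ((*v) A')"
    using coker_fixed_eq_classes[OF \<open>P ** A = A ** P\<close>] by simp
  moreover have "A = A' ** D"
    using assms(2,5,6) mat_polys_commute by metis
  ultimately have "card (coker_fixed A P) = card (coker D)"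
    using card_classes_range_cofactor inj_matrix_vector_mult_2[OF \<open>det A' \<noteq> 0\<close>] by simp
  then show ?thesis
    using card_coker_eq_abs_det[OF \<open>det D \<noteq> 0\<close>] by simp
qed

theorem lemma3p8:
  fixes g :: "int^2^2" and k p :: nat
  assumes "det g = 1"
    and "k \<ge> 1"
    and "det (mat 1 - mat_pow g k) \<noteq> 0"
    and "1 \<le> p" and "p < k"
  shows "int (card (coker_fixed (mat 1 - mat_pow g k) (mat_pow g p)))
         = \<bar>det (mat 1 - mat_pow g
              (if has_finite_order g then gcd (gcd k p) (mat_order g) else gcd k p))\<bar>"
proof -
  \<comment> \<open>Only \<open>det (mat 1 - mat_pow g k) \<noteq> 0\<close> is needed.\<close>
  define d where "d = (if has_finite_order g then gcd (gcd k p) (mat_order g) else gcd k p)"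
  have "d dvd k" "d dvd p"
    unfolding d_def by (auto intro: dvd_trans[OF gcd_dvd1])
  then obtain A' B' where A': "A' \<in> mat_polys g" "mat 1 - mat_pow g k = (mat 1 - mat_pow g d) ** A'"
    and B': "B' \<in> mat_polys g" "mat 1 - mat_pow g p = (mat 1 - mat_pow g d) ** B'"
    by (metis one_minus_mat_pow_dvd)
  obtain X Y where XY: "X \<in> mat_polys g" "Y \<in> mat_polys g"
    "mat 1 - mat_pow g d = (mat 1 - mat_pow g k) ** X + (mat 1 - mat_pow g p) ** Y"
    unfolding d_def by (rule one_minus_mat_pow_gcd_order)
  have "mat 1 - mat_pow g d \<in> mat_polys g"
    by (intro mat_polys_diff mat_polys_mat mat_pow_in_mat_polys)
  then show ?thesis
    using card_coker_fixed_eq_abs_det[OF assms(3) A'(2) B'(2) XY(3) _ A'(1) B'(1) XY(2)]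
    by (simp add: d_def)
qed

end
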